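(* Let $k,l$ be positive integers, $f$ a $k$-variable Boolean function and $g$ a balanced $l$-variable Boolean function. For $0\le i\le k$ let $a_i=\max_{\mathbf{w}\in\mathbb{F}_2^k,\ \mathrm{wt}(\mathbf{w})=i} W_f^2(\mathbf{w})$. Then $$H_\infty(f\diamond g)=\min_{i\in\{0,\ldots,k\},\ a_i>0}\bigl(-\log a_i + i\cdot H_\infty(g)\bigr).$$
   Context: A Boolean function on $n$ variables is a map $\mathbb{F}_2^n\to\mathbb{F}_2$; it is balanced if it takes the value $1$ on exactly $2^{n-1}$ inputs. The Walsh transform is $W_f(\bm{\alpha})=2^{-n}\sum_{\mathbf{x}\in\mathbb{F}_2^n}(-1)^{f(\mathbf{x})\oplus\langle\mathbf{x},\bm{\alpha}\rangle}$ with $\langle\mathbf{x},\bm{\alpha}\rangle=\bigoplus_i x_i\alpha_i$. $\mathrm{wt}(\mathbf{w})$ is the Hamming weight. All logarithms are base 2. The Fourier min-entropy is $H_\infty(f)=\min_{\bm{\alpha}:W_f^2(\bm{\alpha})\ne0}\log(1/W_f^2(\bm{\alpha}))$. Disjoint composition: for $f$ on $k$ variables and $g$ on $l$ variables, $f\diamond g$ is the $kl$-variable function $(f\diamond g)(\mathbf{x})=f(g(\mathbf{x}^{(1)}),\ldots,g(\mathbf{x}^{(k)}))$, where $\mathbf{x}^{(i)}=(x_{(i-1)l+1},\ldots,x_{il})$. *)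

theory Defs
  imports Complex_Main
begin

text \<open>Vectors in F_2^n are boolean lists of length n; a Boolean function on n
variables is a map bool list \<Rightarrow> bool, of which only the values on cube n matter.\<close>

definition cube :: "nat \<Rightarrow> bool list set" where
  "cube n = {xs. length xs = n}"

definition inner :: "bool list \<Rightarrow> bool list \<Rightarrow> bool" where
  "inner x a = odd (card {i. i < length x \<and> x ! i \<and> a ! i})"

definition wt :: "bool list \<Rightarrow> nat" where
  "wt w = card {i. i < length w \<and> w ! i}"

definition walsh :: "nat \<Rightarrow> (bool list \<Rightarrow> bool) \<Rightarrow> bool list \<Rightarrow> real" where
  "walsh n f \<alpha> = (1 / 2 ^ n) * (\<Sum>x\<in>cube n. (if f x = inner x \<alpha> then 1 else -1))"

definition balanced :: "nat \<Rightarrow> (bool list \<Rightarrow> bool) \<Rightarrow> bool" where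
  "balanced n f \<longleftrightarrow> card {x \<in> cube n. f x} = 2 ^ (n - 1)"

definition fourier_min_entropy :: "nat \<Rightarrow> (bool list \<Rightarrow> bool) \<Rightarrow> real" where
  "fourier_min_entropy n f =
     Min {log 2 (1 / (walsh n f \<alpha>)\<^sup>2) | \<alpha>. \<alpha> \<in> cube n \<and> (walsh n f \<alpha>)\<^sup>2 \<noteq> 0}"

definition dcomp :: "nat \<Rightarrow> nat \<Rightarrow> (bool list \<Rightarrow> bool) \<Rightarrow> (bool list \<Rightarrow> bool) \<Rightarrow> bool list \<Rightarrow> bool" where
  "dcomp k l f g x = f (map (\<lambda>i. g (take l (drop (i * l) x))) [0..<k])"

definition max_walsh_sq_wt :: "nat \<Rightarrow> (bool list \<Rightarrow> bool) \<Rightarrow> nat \<Rightarrow> real" where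
  "max_walsh_sq_wt k f i = Max {(walsh k f w)\<^sup>2 | w. w \<in> cube k \<and> wt w = i}"

end

theory Submission imports Defs begin

text \<open>Split a spectral point of \<open>f \<diamond> g\<close> into blocks \<open>\<beta>\<^sub>1, \<dots>, \<beta>\<^sub>k\<close> of length \<open>l\<close>
  and let \<open>w\<close> record which blocks are nonzero. Expanding the Walsh sum one block at a time gives
  \<open>W\<^bsub>f \<diamond> g\<^esub>(\<beta>) = W\<^sub>f(w) \<cdot> \<Prod>\<^bsub>\<beta>\<^sub>i \<noteq> 0\<^esub> W\<^sub>g(\<beta>\<^sub>i)\<close>: a zero block contributes no
  factor because the term carrying \<open>W\<^sub>g(0)\<close> vanishes for balanced \<open>g\<close>. Taking \<open>log (1/x\<^sup>2)\<close>, the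
  entropy at \<open>\<beta>\<close> is that of \<open>f\<close> at \<open>w\<close>, which is at least \<open>-log a\<^bsub>wt w\<^esub>\<close>, plus \<open>wt w\<close>
  entropies of \<open>g\<close>, each at least \<open>H\<^sub>\<infinity>(g)\<close>. Both bounds are attained at once by a maximiser \<open>w\<close>
  of \<open>a\<^sub>i\<close> with a minimiser for \<open>g\<close> in every block where \<open>w\<close> has a one.\<close>

definition sign :: "bool \<Rightarrow> real" where
  "sign b = (if b then -1 else 1)"

lemma sign_xor: "sign (p = (\<not> q)) = sign p * sign q"
  by (simp add: sign_def)

lemma walsh_eq_sum_sign:
  "walsh n f \<alpha> = (1 / 2 ^ n) * (\<Sum>x\<in>cube n. sign (f x) * sign (inner x \<alpha>))"
  unfolding walsh_def sign_def by (intro arg_cong[where f = "\<lambda>s. _ * s"] sum.cong) auto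

lemma cube_0: "cube 0 = {[]}"
  by (auto simp: cube_def)

lemma cube_Suc: "cube (Suc n) = Cons False ` cube n \<union> Cons True ` cube n"
proof
  show "cube (Suc n) \<subseteq> Cons False ` cube n \<union> Cons True ` cube n"
  proof
    fix x assume "x \<in> cube (Suc n)"
    then obtain b v where "x = b # v" "length v = n"
      by (auto simp: cube_def length_Suc_conv)
    then show "x \<in> Cons False ` cube n \<union> Cons True ` cube n"
      by (cases b) (auto simp: cube_def)
  qed
qed (auto simp: cube_def)

lemma finite_cube: "finite (cube n)"
  by (induction n) (auto simp: cube_0 cube_Suc)

lemma sum_cube_Suc: "(\<Sum>x\<in>cube (Suc n). F x) = (\<Sum>v\<in>cube n. F (False # v) + F (True # v))"
  unfolding cube_Suc
  by (subst sum.union_disjoint) (auto simp: finite_cube sum.reindex sum.distrib)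

lemma sum_cube_add: "(\<Sum>x\<in>cube (m + n). F x) = (\<Sum>x\<in>cube m. \<Sum>y\<in>cube n. F (x @ y))"
  by (induction m arbitrary: F) (simp_all add: cube_0 sum_cube_Suc sum.distrib)

lemma card_cube: "card (cube n) = 2 ^ n"
proof (induction n)
  case (Suc n)
  have "card (cube (Suc n)) = 2 * card (cube n)"
    unfolding card_eq_sum sum_cube_Suc by (simp add: sum_distrib_left)
  with Suc show ?case by simp
qed (simp add: cube_0)

lemma card_less_Suc_conv:
  "card {i. i < Suc n \<and> P i} = (if P 0 then 1 else 0) + card {i. i < n \<and> P (Suc i)}"
proof -
  have split: "{i. i < Suc n \<and> P i} = (if P 0 then {0} else {}) \<union> Suc ` {i. i < n \<and> P (Suc i)}"
    by (auto simp: image_iff less_Suc_eq_0_disj)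
  have "card (Suc ` {i. i < n \<and> P (Suc i)}) = card {i. i < n \<and> P (Suc i)}"
    by (rule card_image) simp
  then show ?thesis unfolding split by (cases "P 0") auto
qed

lemma inner_Nil: "inner [] a = False"
  by (simp add: inner_def)

lemma inner_Cons: "inner (b # v) (c # w) = ((b \<and> c) \<noteq> inner v w)"
  unfolding inner_def by (cases "b \<and> c") (auto simp: card_less_Suc_conv)

lemma inner_append: "length x = length a \<Longrightarrow> inner (x @ y) (a @ r) = (inner x a \<noteq> inner y r)"
proof (induction x arbitrary: a)
  case (Cons b x)
  then obtain c a' where "a = c # a'" "length x = length a'"
    by (cases a) auto
  with Cons show ?case by (auto simp: inner_Cons)
qed (simp add: inner_Nil)

lemma inner_replicate_False: "length x = n \<Longrightarrow> inner x (replicate n False) = False"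
  by (induction x arbitrary: n) (auto simp: inner_Nil inner_Cons)

lemma wt_Nil: "wt [] = 0"
  by (simp add: wt_def)

lemma wt_Cons: "wt (b # w) = (if b then 1 else 0) + wt w"
  unfolding wt_def by (simp add: card_less_Suc_conv)

lemma wt_le_length: "wt w \<le> length w"
  by (induction w) (auto simp: wt_Nil wt_Cons)

lemma wt_replicate_append: "wt (replicate i True @ replicate j False) = i"
proof -
  have "wt (replicate j False) = 0"
    by (induction j) (auto simp: wt_Nil wt_Cons)
  then show ?thesis by (induction i) (auto simp: wt_Cons)
qed

lemma walsh_Cons:
  "walsh (Suc k) f (c # w) = (walsh k (\<lambda>v. f (False # v)) w + sign c * walsh k (\<lambda>v. f (True # v)) w) / 2"
proof -
  have "(\<Sum>x\<in>cube (Suc k). sign (f x) * sign (inner x (c # w))) =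
      (\<Sum>v\<in>cube k. sign (f (False # v)) * sign (inner v w))
      + sign c * (\<Sum>v\<in>cube k. sign (f (True # v)) * sign (inner v w))"
    unfolding sum_cube_Suc inner_Cons by (simp add: sign_xor sum.distrib sum_distrib_left mult_ac)
  then show ?thesis unfolding walsh_eq_sum_sign by (simp add: algebra_simps)
qed

lemma walsh_append:
  assumes "length a = l"
  shows "walsh (l + m) F (a @ r) = (1 / 2 ^ l) * (\<Sum>x\<in>cube l. sign (inner x a) * walsh m (\<lambda>y. F (x @ y)) r)"
proof -
  have "(\<Sum>y\<in>cube m. sign (F (x @ y)) * sign (inner (x @ y) (a @ r)))
      = sign (inner x a) * (\<Sum>y\<in>cube m. sign (F (x @ y)) * sign (inner y r))" if "x \<in> cube l" for x
    using that assms by (simp add: cube_def inner_append sign_xor sum_distrib_left mult_ac)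
  then have "(\<Sum>x\<in>cube (l + m). sign (F x) * sign (inner x (a @ r)))
      = (\<Sum>x\<in>cube l. sign (inner x a) * (\<Sum>y\<in>cube m. sign (F (x @ y)) * sign (inner y r)))"
    unfolding sum_cube_add by (rule sum.cong[OF refl])
  then show ?thesis unfolding walsh_eq_sum_sign power_add by (simp add: sum_distrib_left mult_ac)
qed

lemma sum_sign_inner:
  "length b = l \<Longrightarrow> (\<Sum>x\<in>cube l. sign (inner x b)) = (if b = replicate l False then 2 ^ l else 0)"
proof (induction l arbitrary: b)
  case 0
  then show ?case by (simp add: cube_0 inner_Nil sign_def)
next
  case (Suc l)
  then obtain c w where b: "b = c # w" "length w = l"
    by (cases b) auto
  have "(\<Sum>x\<in>cube (Suc l). sign (inner x b)) = (\<Sum>v\<in>cube l. sign (inner v w)) * (1 + sign c)"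
    unfolding sum_cube_Suc b inner_Cons
    by (simp add: sign_xor sum.distrib sum_distrib_left algebra_simps)
  with Suc.IH[OF b(2)] b show ?case by (auto simp: sign_def)
qed

lemma walsh_replicate_False_if_balanced:
  assumes "balanced l g" "l > 0"
  shows "walsh l g (replicate l False) = 0"
proof -
  define G where "G = {x \<in> cube l. g x}"
  define N where "N = {x \<in> cube l. \<not> g x}"
  have cube_split: "cube l = G \<union> N" "G \<inter> N = {}" and fin: "finite G" "finite N"
    using finite_cube by (auto simp: G_def N_def)
  have "card N + card G = 2 * 2 ^ (l - 1)"
    using card_Un_disjoint[OF fin cube_split(2)] card_cube[of l] assms(2)
    by (simp add: cube_split(1) power_eq_if)
  then have "card N = card G"
    using assms(1) by (simp add: balanced_def G_def)
  have "(\<Sum>x\<in>cube l. sign (g x) * sign (inner x (replicate l False))) = (\<Sum>x\<in>G \<union> N. sign (g x))"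
    by (intro sum.cong) (auto simp: cube_split(1)[symmetric] sign_def cube_def inner_replicate_False)
  also have "\<dots> = (\<Sum>x\<in>G. - 1) + (\<Sum>x\<in>N. 1)"
    unfolding sum.union_disjoint[OF fin cube_split(2)]
    by (intro arg_cong2[where f = "(+)"] sum.cong) (auto simp: G_def N_def sign_def)
  finally show ?thesis
    using \<open>card N = card G\<close> by (simp add: walsh_eq_sum_sign)
qed

lemma ex_walsh_nonzero: "\<exists>w\<in>cube n. walsh n f w \<noteq> 0"
proof (induction n arbitrary: f)
  case 0
  then show ?case by (auto simp: walsh_def cube_0)
next
  case (Suc n)
  obtain w where w: "w \<in> cube n" "walsh n (\<lambda>v. f (False # v)) w \<noteq> 0"
    using Suc.IH by blast
  then have "walsh (Suc n) f (False # w) \<noteq> 0 \<or> walsh (Suc n) f (True # w) \<noteq> 0"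
    by (auto simp: walsh_Cons sign_def)
  moreover have "False # w \<in> cube (Suc n)" "True # w \<in> cube (Suc n)"
    using w(1) by (auto simp: cube_def)
  ultimately show ?case by blast
qed

lemma dcomp_append:
  assumes "length b = l"
  shows "dcomp (Suc k) l f g (b @ r) = dcomp k l (\<lambda>v. f (g b # v)) g r"
proof -
  have "[0..<Suc k] = 0 # map Suc [0..<k]"
    by (simp add: upt_conv_Cons map_Suc_upt del: upt_Suc)
  then have "map (\<lambda>i. g (take l (drop (i * l) (b @ r)))) [0..<Suc k]
      = g b # map (\<lambda>i. g (take l (drop (i * l) r))) [0..<k]"
    using assms by simp
  then show ?thesis unfolding dcomp_def by simp
qed

lemma ex_concat_blocks:
  "length \<alpha> = k * l \<Longrightarrow> \<exists>bs. length bs = k \<and> (\<forall>b\<in>set bs. length b = l) \<and> \<alpha> = concat bs"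
proof (induction k arbitrary: \<alpha>)
  case (Suc k)
  then obtain bs where "length bs = k" "\<forall>b\<in>set bs. length b = l" "drop l \<alpha> = concat bs"
    by (metis length_drop mult_Suc diff_add_inverse)
  with Suc.prems show ?case
    by (intro exI[of _ "take l \<alpha> # bs"]) (auto simp flip: \<open>drop l \<alpha> = concat bs\<close>)
qed simp

definition block_support :: "nat \<Rightarrow> bool list list \<Rightarrow> bool list" where
  "block_support l bs = map (\<lambda>b. b \<noteq> replicate l False) bs"

definition block_factor :: "nat \<Rightarrow> (bool list \<Rightarrow> bool) \<Rightarrow> bool list \<Rightarrow> real" where
  "block_factor l g b = (if b = replicate l False then 1 else walsh l g b)"

lemma walsh_dcomp_concat:
  assumes "balanced l g" "l > 0" "length bs = k" "\<forall>b\<in>set bs. length b = l"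
  shows "walsh (k * l) (dcomp k l f g) (concat bs)
    = walsh k f (block_support l bs) * prod_list (map (block_factor l g) bs)"
  using assms(3,4)
proof (induction bs arbitrary: k f)
  case Nil
  then show ?case by (simp add: walsh_def cube_0 dcomp_def block_support_def)
next
  case (Cons b bs)
  then obtain k' where k: "k = Suc k'" and b: "length b = l"
    and bs: "length bs = k'" "\<forall>b\<in>set bs. length b = l"
    by auto
  define w where "w = block_support l bs"
  define P where "P = prod_list (map (block_factor l g) bs)"
  define A where "A = walsh k' (\<lambda>v. f (True # v)) w"
  define B where "B = walsh k' (\<lambda>v. f (False # v)) w"
  define C where "C = (A + B) / 2 * P"
  define D where "D = (B - A) / 2 * P"
  \<comment> \<open>the first block enters only through \<open>g\<close>, so the rest is affine in \<open>sign (g x)\<close>\<close>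
  have inner_walsh: "walsh (k' * l) (\<lambda>y. dcomp k l f g (x @ y)) (concat bs)
      = C + sign (g x) * D" if "x \<in> cube l" for x
  proof -
    have "(\<lambda>y. dcomp k l f g (x @ y)) = dcomp k' l (\<lambda>v. f (g x # v)) g"
      using that dcomp_append[of x l k' f g] by (auto simp: k cube_def)
    then show ?thesis
      using Cons.IH[OF bs]
      by (cases "g x") (simp_all add: w_def P_def A_def B_def C_def D_def sign_def field_simps)
  qed
  have "walsh (k * l) (dcomp k l f g) (concat (b # bs))
      = (1 / 2 ^ l) * (\<Sum>x\<in>cube l. sign (inner x b) * (C + sign (g x) * D))"
    using walsh_append[OF b, of "k' * l" "dcomp k l f g" "concat bs"] inner_walsh
    by (simp add: k)
  also have "\<dots> = C * ((1 / 2 ^ l) * (\<Sum>x\<in>cube l. sign (inner x b))) + D * walsh l g b"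
    unfolding walsh_eq_sum_sign by (simp add: distrib_left sum.distrib sum_distrib_left mult_ac)
  also have "\<dots> = walsh k f (block_support l (b # bs)) * prod_list (map (block_factor l g) (b # bs))"
    using sum_sign_inner[OF b] walsh_replicate_False_if_balanced[OF assms(1,2)]
    by (cases "b = replicate l False")
      (simp_all add: k walsh_Cons block_support_def block_factor_def sign_def
        A_def B_def C_def D_def w_def P_def field_simps)
  finally show ?case .
qed

lemma log_inv_sq_mult:
  "x \<noteq> 0 \<Longrightarrow> y \<noteq> 0 \<Longrightarrow> log 2 (1 / (x * y)\<^sup>2) = log 2 (1 / x\<^sup>2) + log 2 (1 / y\<^sup>2)"
  by (simp add: log_recip log_mult power_mult_distrib)

lemma log_inv_sq_power:
  assumes "x \<noteq> 0"
  shows "log 2 (1 / (x ^ n)\<^sup>2) = n * log 2 (1 / x\<^sup>2)"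
proof -
  have "1 / (x ^ n)\<^sup>2 = (1 / x\<^sup>2) ^ n"
    by (simp add: power_one_over flip: power_mult) (simp add: mult.commute power_mult)
  then show ?thesis
    using assms by (simp add: log_nat_power)
qed

lemma finite_walsh_entropies:
  "finite {log 2 (1 / (walsh n f \<alpha>)\<^sup>2) | \<alpha>. \<alpha> \<in> cube n \<and> (walsh n f \<alpha>)\<^sup>2 \<noteq> 0}"
  by (rule finite_image_set) (simp add: finite_cube)

lemma fourier_min_entropy_le:
  "\<alpha> \<in> cube n \<Longrightarrow> walsh n f \<alpha> \<noteq> 0 \<Longrightarrow> fourier_min_entropy n f \<le> log 2 (1 / (walsh n f \<alpha>)\<^sup>2)"
  unfolding fourier_min_entropy_def by (rule Min_le[OF finite_walsh_entropies]) auto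

lemma fourier_min_entropy_attained:
  obtains \<alpha> where "\<alpha> \<in> cube n" "walsh n f \<alpha> \<noteq> 0"
    "fourier_min_entropy n f = log 2 (1 / (walsh n f \<alpha>)\<^sup>2)"
proof -
  have "fourier_min_entropy n f \<in> {log 2 (1 / (walsh n f \<alpha>)\<^sup>2) | \<alpha>. \<alpha> \<in> cube n \<and> (walsh n f \<alpha>)\<^sup>2 \<noteq> 0}"
    unfolding fourier_min_entropy_def using ex_walsh_nonzero[of n f]
    by (intro Min_in[OF finite_walsh_entropies]) auto
  with that show ?thesis by auto
qed

lemma finite_walsh_sq_wt: "finite {(walsh k f w)\<^sup>2 | w. w \<in> cube k \<and> wt w = i}"
  by (rule finite_image_set) (simp add: finite_cube)

lemma walsh_sq_le_max_walsh_sq_wt: "w \<in> cube k \<Longrightarrow> (walsh k f w)\<^sup>2 \<le> max_walsh_sq_wt k f (wt w)"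
  unfolding max_walsh_sq_wt_def by (rule Max_ge[OF finite_walsh_sq_wt]) auto

lemma max_walsh_sq_wt_attained:
  assumes "i \<le> k"
  obtains w where "w \<in> cube k" "wt w = i" "(walsh k f w)\<^sup>2 = max_walsh_sq_wt k f i"
proof -
  have "replicate i True @ replicate (k - i) False \<in> cube k"
    using assms by (simp add: cube_def)
  then have "{(walsh k f w)\<^sup>2 | w. w \<in> cube k \<and> wt w = i} \<noteq> {}"
    using wt_replicate_append by blast
  then have "max_walsh_sq_wt k f i \<in> {(walsh k f w)\<^sup>2 | w. w \<in> cube k \<and> wt w = i}"
    unfolding max_walsh_sq_wt_def by (rule Max_in[OF finite_walsh_sq_wt])
  with that show ?thesis by auto
qed

lemma log_inv_sq_block_factors_ge:
  assumes "\<forall>b\<in>set bs. length b = l" "prod_list (map (block_factor l g) bs) \<noteq> 0"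
  shows "real (wt (block_support l bs)) * fourier_min_entropy l g
    \<le> log 2 (1 / (prod_list (map (block_factor l g) bs))\<^sup>2)"
  using assms
proof (induction bs)
  case Nil
  then show ?case by (simp add: wt_Nil block_support_def)
next
  case (Cons b bs)
  define P where "P = prod_list (map (block_factor l g) bs)"
  have nonzero: "block_factor l g b \<noteq> 0" "P \<noteq> 0"
    using Cons.prems(2) by (auto simp: P_def)
  have tail: "real (wt (block_support l bs)) * fourier_min_entropy l g \<le> log 2 (1 / P\<^sup>2)"
    using Cons nonzero(2) by (simp add: P_def)
  show ?case
  proof (cases "b = replicate l False")
    case True
    then have "block_factor l g b = 1"
      by (simp add: block_factor_def)
    with tail True show ?thesis
      by (simp add: P_def block_support_def wt_Cons)
  next
    case False
    with nonzero(1) Cons.prems(1) have "fourier_min_entropy l g \<le> log 2 (1 / (block_factor l g b)\<^sup>2)"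
      by (auto simp: block_factor_def cube_def intro: fourier_min_entropy_le)
    with tail False show ?thesis
      by (simp add: log_inv_sq_mult[OF nonzero] flip: P_def)
        (simp add: P_def block_support_def wt_Cons algebra_simps)
  qed
qed

lemma dcomp_walsh_entropy_ge:
  assumes "balanced l g" "l > 0" "\<alpha> \<in> cube (k * l)" "walsh (k * l) (dcomp k l f g) \<alpha> \<noteq> 0"
  obtains i where "i \<le> k" "max_walsh_sq_wt k f i > 0"
    "- log 2 (max_walsh_sq_wt k f i) + real i * fourier_min_entropy l g
      \<le> log 2 (1 / (walsh (k * l) (dcomp k l f g) \<alpha>)\<^sup>2)"
proof -
  obtain bs where bs: "length bs = k" "\<forall>b\<in>set bs. length b = l" "\<alpha> = concat bs"
    using ex_concat_blocks assms(3) unfolding cube_def by blast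
  define w where "w = block_support l bs"
  define P where "P = prod_list (map (block_factor l g) bs)"
  have W: "walsh (k * l) (dcomp k l f g) \<alpha> = walsh k f w * P"
    using walsh_dcomp_concat[OF assms(1,2) bs(1,2)] bs(3) by (simp add: w_def P_def)
  with assms(4) have nonzero: "walsh k f w \<noteq> 0" "P \<noteq> 0"
    by auto
  have w: "w \<in> cube k"
    using bs(1) by (simp add: w_def cube_def block_support_def)
  then have W_le: "(walsh k f w)\<^sup>2 \<le> max_walsh_sq_wt k f (wt w)"
    by (rule walsh_sq_le_max_walsh_sq_wt)
  moreover have "0 < (walsh k f w)\<^sup>2"
    using nonzero(1) by simp
  ultimately have a_pos: "0 < max_walsh_sq_wt k f (wt w)"
    by (rule order.strict_trans2[rotated])
  with W_le nonzero(1) have "- log 2 (max_walsh_sq_wt k f (wt w)) \<le> log 2 (1 / (walsh k f w)\<^sup>2)"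
    by (simp add: log_recip)
  moreover have "real (wt w) * fourier_min_entropy l g \<le> log 2 (1 / P\<^sup>2)"
    using log_inv_sq_block_factors_ge[OF bs(2)] nonzero(2) by (simp add: w_def P_def)
  ultimately have "- log 2 (max_walsh_sq_wt k f (wt w)) + real (wt w) * fourier_min_entropy l g
      \<le> log 2 (1 / (walsh (k * l) (dcomp k l f g) \<alpha>)\<^sup>2)"
    unfolding W log_inv_sq_mult[OF nonzero] by linarith
  moreover have "wt w \<le> k"
    using wt_le_length[of w] w by (simp add: cube_def)
  ultimately show ?thesis
    using that a_pos by blast
qed

lemma dcomp_walsh_entropy_attained:
  assumes "balanced l g" "l > 0" "i \<le> k" "max_walsh_sq_wt k f i > 0"
  obtains \<alpha> where "\<alpha> \<in> cube (k * l)" "walsh (k * l) (dcomp k l f g) \<alpha> \<noteq> 0"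
    "log 2 (1 / (walsh (k * l) (dcomp k l f g) \<alpha>)\<^sup>2)
      = - log 2 (max_walsh_sq_wt k f i) + real i * fourier_min_entropy l g"
proof -
  obtain w where w: "w \<in> cube k" "wt w = i" "(walsh k f w)\<^sup>2 = max_walsh_sq_wt k f i"
    using max_walsh_sq_wt_attained[OF assms(3)] .
  obtain \<beta> where \<beta>: "\<beta> \<in> cube l" "walsh l g \<beta> \<noteq> 0"
    "fourier_min_entropy l g = log 2 (1 / (walsh l g \<beta>)\<^sup>2)"
    using fourier_min_entropy_attained .
  have \<beta>_nonzero: "\<beta> \<noteq> replicate l False"
    using \<beta>(2) walsh_replicate_False_if_balanced[OF assms(1,2)] by auto
  define blocks where "blocks v = map (\<lambda>c. if c then \<beta> else replicate l False) v" for v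
  have "block_support l (blocks v) = v \<and> prod_list (map (block_factor l g) (blocks v)) = walsh l g \<beta> ^ wt v"
    for v using \<beta>_nonzero
    by (induction v) (auto simp: blocks_def block_support_def block_factor_def wt_Nil wt_Cons)
  moreover define bs where "bs = blocks w"
  ultimately have "block_support l bs = w" "prod_list (map (block_factor l g) bs) = walsh l g \<beta> ^ wt w"
    by auto
  moreover have bs: "length bs = k" "\<forall>b\<in>set bs. length b = l"
    using w(1) \<beta>(1) by (auto simp: bs_def blocks_def cube_def)
  ultimately have W: "walsh (k * l) (dcomp k l f g) (concat bs) = walsh k f w * walsh l g \<beta> ^ i"
    using walsh_dcomp_concat[OF assms(1,2) bs] w(2) by simp
  have Wf: "walsh k f w \<noteq> 0"
    using w(3) assms(4) by auto
  show ?thesis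
  proof
    show "concat bs \<in> cube (k * l)"
      using bs by (simp add: cube_def length_concat map_idI sum_list_triv cong: map_cong)
    show "walsh (k * l) (dcomp k l f g) (concat bs) \<noteq> 0"
      using W Wf \<beta>(2) by simp
    show "log 2 (1 / (walsh (k * l) (dcomp k l f g) (concat bs))\<^sup>2)
      = - log 2 (max_walsh_sq_wt k f i) + real i * fourier_min_entropy l g"
      unfolding W log_inv_sq_mult[OF Wf power_not_zero[OF \<beta>(2)]] log_inv_sq_power[OF \<beta>(2)]
      using w(3) \<beta>(3) by (simp add: log_recip)
  qed
qed

lemma Min_eq_Min_if_dominated:
  fixes S T :: "'a::linorder set"
  assumes "finite S" "T \<subseteq> S" "S \<noteq> {}" "\<And>s. s \<in> S \<Longrightarrow> \<exists>t\<in>T. t \<le> s"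
  shows "Min S = Min T"
proof (rule antisym)
  have "finite T"
    using assms(1,2) finite_subset by blast
  obtain t where t: "t \<in> T" "t \<le> Min S"
    using assms(4)[OF Min_in[OF assms(1,3)]] by blast
  then have "Min T \<in> S"
    using Min_in[OF \<open>finite T\<close>] assms(2) by blast
  then show "Min S \<le> Min T"
    by (rule Min_le[OF assms(1)])
  show "Min T \<le> Min S"
    using Min_le[OF \<open>finite T\<close> t(1)] t(2) by (rule order_trans)
qed

theorem theorem4:
  fixes k l :: nat and f g :: "bool list \<Rightarrow> bool"
  assumes "k > 0" and "l > 0" and "balanced l g"
  shows "fourier_min_entropy (k * l) (dcomp k l f g) =
    Min {- log 2 (max_walsh_sq_wt k f i) + real i * fourier_min_entropy l g
          | i. i \<le> k \<and> max_walsh_sq_wt k f i > 0}"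
proof -
  let ?S = "{log 2 (1 / (walsh (k * l) (dcomp k l f g) \<alpha>)\<^sup>2) | \<alpha>.
    \<alpha> \<in> cube (k * l) \<and> (walsh (k * l) (dcomp k l f g) \<alpha>)\<^sup>2 \<noteq> 0}"
  let ?T = "{- log 2 (max_walsh_sq_wt k f i) + real i * fourier_min_entropy l g
    | i. i \<le> k \<and> max_walsh_sq_wt k f i > 0}"
  have "?T \<subseteq> ?S"
  proof
    fix t assume "t \<in> ?T"
    then obtain i where "i \<le> k" "max_walsh_sq_wt k f i > 0"
      "t = - log 2 (max_walsh_sq_wt k f i) + real i * fourier_min_entropy l g"
      by blast
    then obtain \<alpha> where "\<alpha> \<in> cube (k * l)" "walsh (k * l) (dcomp k l f g) \<alpha> \<noteq> 0"
      "log 2 (1 / (walsh (k * l) (dcomp k l f g) \<alpha>)\<^sup>2) = t"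
      using dcomp_walsh_entropy_attained[OF assms(3,2)] by metis
    then show "t \<in> ?S"
      by auto
  qed
  moreover have "?S \<noteq> {}"
    using ex_walsh_nonzero[of "k * l" "dcomp k l f g"] by auto
  moreover have "\<exists>t\<in>?T. t \<le> s" if s: "s \<in> ?S" for s
  proof -
    obtain \<alpha> where "\<alpha> \<in> cube (k * l)" "walsh (k * l) (dcomp k l f g) \<alpha> \<noteq> 0"
      "s = log 2 (1 / (walsh (k * l) (dcomp k l f g) \<alpha>)\<^sup>2)"
      using s by fastforce
    then obtain i where "i \<le> k" "max_walsh_sq_wt k f i > 0"
      "- log 2 (max_walsh_sq_wt k f i) + real i * fourier_min_entropy l g \<le> s"
      using dcomp_walsh_entropy_ge[OF assms(3,2)] by metis
    then show ?thesis
      by blast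
  qed
  ultimately show ?thesis
    unfolding fourier_min_entropy_def[of "k * l"]
    by (rule Min_eq_Min_if_dominated[OF finite_walsh_entropies])
qed

end
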